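(* For every prime $q$, let $S_q=\{d+q\mathbb{Z}: d\in\mathbb{Z}_{>0},\ d\mid\prod_{p<q}p\}\subseteq(\mathbb{Z}/q\mathbb{Z})^\times$, where the product is over primes $p<q$. Then $\#S_q>\frac12(q-1)$.
   Context: $S_q$ is the set of residue classes modulo $q$ attained by the squarefree positive integers all of whose prime factors are less than $q$. *)

theory Defs
  imports "HOL-Computational_Algebra.Primes"
begin

definition primorial_below :: "nat \<Rightarrow> nat" where
  "primorial_below q = (\<Prod>p\<in>{p. prime p \<and> p < q}. p)"

text \<open>S_q: residue classes mod q (represented by their least nonnegative
  residue) of positive divisors of the product of primes below q.\<close>
definition S :: "nat \<Rightarrow> nat set" where
  "S q = {d mod q | d. d > 0 \<and> d dvd primorial_below q}"

end

theory Submission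
  imports Defs Complex_Main "HOL-Computational_Algebra.Squarefree"
begin

text \<open>A squarefree \<open>k < q\<close> is a product of distinct primes below \<open>q\<close>, so it divides
  the primorial and is its own residue mod \<open>q\<close>; hence it suffices that more than half of
  \<open>1, \<dots>, n\<close> are squarefree. A non-squarefree \<open>k \<le> n\<close> is divisible by \<open>4\<close> or by
  \<open>(2j+1)\<^sup>2\<close> for some \<open>j \<ge> 1\<close>, and the sum of \<open>1/(2j+1)\<^sup>2\<close> over \<open>j \<ge> 1\<close> is less
  than \<open>1/4\<close> by telescoping against \<open>1/(4j(j+1))\<close>; so fewer than \<open>n/4 + n/4\<close> of
  these numbers are not squarefree.\<close>

lemma squarefree_nat_eq_prod_prime_factors:
  fixes n :: nat
  assumes "squarefree n"
  shows "n = (\<Prod>p\<in>prime_factors n. p)"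
proof -
  have "n \<noteq> 0" using assms by (cases "n = 0") auto
  then have "n = (\<Prod>p\<in>prime_factors n. p ^ multiplicity p n)"
    by (simp add: prod_prime_factors)
  also have "\<dots> = (\<Prod>p\<in>prime_factors n. p)"
    using assms \<open>n \<noteq> 0\<close> by (intro prod.cong) (auto simp: squarefree_factorial_semiring')
  finally show ?thesis .
qed

lemma squarefree_dvd_primorial_below:
  assumes "squarefree k" "k < q"
  shows "k dvd primorial_below q"
proof -
  have "k \<noteq> 0" using assms(1) by (cases "k = 0") auto
  then have "prime_factors k \<subseteq> {p. prime p \<and> p < q}"
    using assms(2) by (auto dest: in_prime_factors_imp_prime dvd_imp_le order.strict_trans1)
  moreover have "finite {p. prime p \<and> p < (q::nat)}" by simp
  ultimately have "(\<Prod>p\<in>prime_factors k. p) dvd primorial_below q"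
    unfolding primorial_below_def by (rule prod_dvd_prod_subset[rotated])
  then show ?thesis using squarefree_nat_eq_prod_prime_factors[OF assms(1)] by simp
qed

lemma card_multiples_atLeastAtMost:
  fixes d n :: nat
  assumes "d > 0"
  shows "card {k\<in>{1..n}. d dvd k} = n div d"
proof -
  have "{k\<in>{1..n}. d dvd k} = (\<lambda>i. d * i) ` {1..n div d}"
  proof (intro equalityI subsetI)
    fix k assume "k \<in> {k\<in>{1..n}. d dvd k}"
    then obtain i where "k = d * i" "1 \<le> d * i" "d * i \<le> n" by auto
    then show "k \<in> (\<lambda>i. d * i) ` {1..n div d}"
      using assms by (auto simp: less_eq_div_iff_mult_less_eq mult.commute intro!: Nat.gr0I)
  next
    fix k assume "k \<in> (\<lambda>i. d * i) ` {1..n div d}"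
    then obtain i where "k = d * i" "i \<in> {1..n div d}" by blast
    then show "k \<in> {k\<in>{1..n}. d dvd k}"
      using assms by (auto simp: less_eq_div_iff_mult_less_eq mult.commute)
  qed
  moreover have "inj_on (\<lambda>i. d * i) {1..n div d}" using assms by (auto simp: inj_on_def)
  ultimately show ?thesis by (simp add: card_image)
qed

lemma sum_inverse_odd_squares_le:
  "(\<Sum>j=1..K. 1 / real ((2*j+1)^2)) \<le> 1/4 - 1 / (4 * real (K+1))"
proof (induction K)
  case (Suc K)
  have "4 * real (K+1) * real (K+2) \<le> real ((2*K+3)^2)"
    by (simp add: power2_eq_square algebra_simps)
  then have "1 / real ((2*Suc K+1)^2) \<le> 1 / (4 * real (K+1) * real (K+2))"
    by (intro divide_left_mono) (auto simp: numeral_3_eq_3)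
  also have "\<dots> = 1 / (4 * real (K+1)) - 1 / (4 * real (K+2))"
    by (simp add: field_split_simps)
  finally show ?case using Suc by simp
qed simp

lemma not_squarefree_imp_square_dvd:
  fixes k :: nat
  assumes "\<not> squarefree k" "k \<in> {1..n}"
  shows "4 dvd k \<or> (\<exists>j\<in>{1..n}. (2*j+1)^2 dvd k)"
proof -
  obtain p :: nat where p: "prime p" "p^2 dvd k"
    using assms squarefree_factorial_semiring[of k] by auto
  have "p \<le> p^2" by (simp add: power2_eq_square)
  also have "p^2 \<le> n" using p assms(2) by (auto dest: dvd_imp_le)
  finally have "p \<le> n" .
  show ?thesis
  proof (cases "p = 2")
    case False
    then obtain j where "p = 2*j+1" using p(1) prime_odd_nat prime_ge_2_nat
      by (metis le_neq_implies_less oddE)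
    moreover have "j \<ge> 1" using \<open>p = 2*j+1\<close> p(1) by (cases j) auto
    ultimately show ?thesis using p(2) \<open>p \<le> n\<close> by auto
  qed (use p in auto)
qed

lemma card_not_squarefree_atLeastAtMost_less:
  assumes "n \<ge> 1"
  shows "2 * card {k\<in>{1..n}. \<not> squarefree k} < n"
proof -
  let ?M = "\<lambda>d. {k\<in>{1..n}. d dvd k}"
  have "{k\<in>{1..n}. \<not> squarefree k} \<subseteq> ?M 4 \<union> (\<Union>j\<in>{1..n}. ?M ((2*j+1)^2))"
    using not_squarefree_imp_square_dvd by blast
  then have "card {k\<in>{1..n}. \<not> squarefree k} \<le> card (?M 4 \<union> (\<Union>j\<in>{1..n}. ?M ((2*j+1)^2)))"
    by (intro card_mono) auto
  also have "\<dots> \<le> card (?M 4) + (\<Sum>j=1..n. card (?M ((2*j+1)^2)))"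
    by (intro order.trans[OF card_Un_le] add_left_mono card_UN_le) simp
  also have "\<dots> = n div 4 + (\<Sum>j=1..n. n div (2*j+1)^2)"
    using card_multiples_atLeastAtMost[of 4 n] card_multiples_atLeastAtMost[of "(2*j+1)^2" n for j]
    by simp
  finally have "real (card {k\<in>{1..n}. \<not> squarefree k})
      \<le> real (n div 4) + (\<Sum>j=1..n. real (n div (2*j+1)^2))"
    by (simp flip: of_nat_sum of_nat_add)
  also have "\<dots> \<le> real n / 4 + (\<Sum>j=1..n. real n * (1 / real ((2*j+1)^2)))"
    by (intro add_mono sum_mono) (auto intro: order.trans[OF of_nat_div_le_of_nat])
  also have "\<dots> = real n / 4 + real n * (\<Sum>j=1..n. 1 / real ((2*j+1)^2))"
    by (simp add: sum_distrib_left)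
  also have "\<dots> \<le> real n / 4 + real n * (1/4 - 1 / (4 * real (n+1)))"
    by (intro add_left_mono mult_left_mono sum_inverse_odd_squares_le) auto
  also have "\<dots> < real n / 2"
    using assms by (simp add: field_simps)
  finally show ?thesis by linarith
qed

lemma card_squarefree_atLeastAtMost_gt:
  assumes "n \<ge> 1"
  shows "2 * card {k\<in>{1..n}. squarefree k} > n"
proof -
  have "card ({k\<in>{1..n}. squarefree k} \<union> {k\<in>{1..n}. \<not> squarefree k})
      = card {k\<in>{1..n}. squarefree k} + card {k\<in>{1..n}. \<not> squarefree k}"
    by (rule card_Un_disjoint) auto
  moreover have "{k\<in>{1..n}. squarefree k} \<union> {k\<in>{1..n}. \<not> squarefree k} = {1..n}" by auto
  ultimately have "card {k\<in>{1..n}. squarefree k} + card {k\<in>{1..n}. \<not> squarefree k} = n"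
    by simp
  with card_not_squarefree_atLeastAtMost_less[OF assms] show ?thesis by linarith
qed

theorem lemma1:
  fixes q :: nat
  assumes "prime q"
  shows "2 * card (S q) > q - 1"
proof -
  have "q \<ge> 2" using assms prime_ge_2_nat by blast
  have "{k\<in>{1..q-1}. squarefree k} \<subseteq> S q"
  proof
    fix k assume k: "k \<in> {k\<in>{1..q-1}. squarefree k}"
    then have "k = k mod q" "k > 0" "k dvd primorial_below q"
      using \<open>q \<ge> 2\<close> by (auto intro: squarefree_dvd_primorial_below)
    then show "k \<in> S q" unfolding S_def by blast
  qed
  moreover have "finite (S q)"
    by (rule finite_subset[of _ "{..<q}"]) (use \<open>q \<ge> 2\<close> in \<open>auto simp: S_def\<close>)
  ultimately have "card {k\<in>{1..q-1}. squarefree k} \<le> card (S q)"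
    by (rule card_mono[rotated])
  moreover have "2 * card {k\<in>{1..q-1}. squarefree k} > q - 1"
    using \<open>q \<ge> 2\<close> by (intro card_squarefree_atLeastAtMost_gt) auto
  ultimately show ?thesis by linarith
qed

end
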